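(* Consider two $M^{X}/G/1$ queues operating under the LCFS-p-repeat (with resampling) discipline, with the same Poisson batch-arrival rate $\lambda$ and the same batch-size distribution (mean $\mu$), and with generic i.i.d. service times $S$ and $S'$ respectively, both stable ($E(e^{-\lambda S})>\mu/(\mu+1)$ and $E(e^{-\lambda S'})>\mu/(\mu+1)$). Let $M$ and $M'$ be the maximum numbers of customers in the system during a busy period in the respective queues. If $E(e^{-\lambda S'})\geq E(e^{-\lambda S})$, then $M'\leq_{st}M$.
   Context: Under LCFS-p-repeat (with resampling), the customer who has been in the system the least amount of time is always served, newly arriving customers preempt the customer in service (customers within a batch are labeled arbitrarily and treated as arriving sequentially), service is non-idling, and a preempted service must be restarted from scratch when service recommences, with a new service time drawn independently from the service-time distribution. $X\geq_{st}Y$ iff $P(X>t)\geq P(Y>t)$ for all $t$. *)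

theory Defs
  imports "HOL-Probability.Probability"
begin

text \<open>Sample-path model of one busy period of an M^X/G/1 queue under LCFS-p-repeat
with resampling.  Inputs: s j = service requirement drawn at the j-th service start
(attempt-indexed, fresh independent draw at each (re)start), e k = k-th interarrival
time of batches, b k = size of the k-th batch (b 0 = batch that starts the busy period
at time 0).  State: (customers in system, residual time to next batch arrival,
index of next service draw, index of next batch).\<close>

fun lcfs_step :: "(nat \<Rightarrow> real) \<Rightarrow> (nat \<Rightarrow> real) \<Rightarrow> (nat \<Rightarrow> nat) \<Rightarrow>
    nat \<times> real \<times> nat \<times> nat \<Rightarrow> nat \<times> real \<times> nat \<times> nat" where
  "lcfs_step s e b (n, r, j, k) =
     (if n = 0 then (n, r, j, k)
      else if s j < r then (n - 1, r - s j, Suc j, k)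
      else (n + b k, e k, Suc j, Suc k))"

definition lcfs_path :: "(nat \<Rightarrow> real) \<Rightarrow> (nat \<Rightarrow> real) \<Rightarrow> (nat \<Rightarrow> nat) \<Rightarrow>
    nat \<Rightarrow> nat \<times> real \<times> nat \<times> nat" where
  "lcfs_path s e b i = (lcfs_step s e b ^^ i) (b 0, e 0, 0, 1)"

text \<open>Maximum number of customers in the system during the busy period
(the path is frozen once the system empties; value \<infinity> if it never empties).\<close>
definition lcfs_busy_max :: "(nat \<Rightarrow> real) \<Rightarrow> (nat \<Rightarrow> real) \<Rightarrow> (nat \<Rightarrow> nat) \<Rightarrow> enat" where
  "lcfs_busy_max s e b = (SUP i. enat (fst (lcfs_path s e b i)))"

definition lcfs_input :: "'w measure \<Rightarrow> real \<Rightarrow> (nat \<Rightarrow> 'w \<Rightarrow> real) \<Rightarrow>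
    (nat \<Rightarrow> 'w \<Rightarrow> real) \<Rightarrow> (nat \<Rightarrow> 'w \<Rightarrow> nat) \<Rightarrow> bool" where
  "lcfs_input P lam s e b \<longleftrightarrow>
     prob_space P \<and> 0 < lam \<and>
     prob_space.indep_vars P (\<lambda>_. borel)
       (\<lambda>i \<omega>. case i of Inl (Inl j) \<Rightarrow> s j \<omega> | Inl (Inr k) \<Rightarrow> e k \<omega> | Inr k \<Rightarrow> real (b k \<omega>))
       (UNIV :: ((nat + nat) + nat) set) \<and>
     (\<forall>j. distr P borel (s j) = distr P borel (s 0)) \<and>
     (\<forall>j. AE \<omega> in P. 0 \<le> s j \<omega>) \<and>
     (\<forall>k. distributed P lborel (e k) (exponential_density lam)) \<and>
     (\<forall>k. b k \<in> measurable P (count_space UNIV)) \<and>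
     (\<forall>k. distr P (count_space UNIV) (b k) = distr P (count_space UNIV) (b 0)) \<and>
     (\<forall>k. AE \<omega> in P. 1 \<le> b k \<omega>) \<and>
     integrable P (\<lambda>\<omega>. real (b 0 \<omega>))"

end

theory Submission
  imports Defs
begin

text \<open>Observe the queue only at the ends of service attempts.  By the memorylessness of the
exponential interarrival times, the residual time to the next batch arrival is again
exponential after every attempt, independently of the past.  Hence the number of customers
performs a random walk absorbed at 0: each attempt completes with probability
\<open>p = E(e^{-\<lambda>S})\<close>, decreasing the walk by one, and is otherwise preempted by a batch of
size \<open>\<beta>\<close>, increasing it by \<open>\<beta>\<close>.  The probability that this walk exceeds \<open>m\<close> within \<open>N\<close>
attempts is increasing in the starting point, and therefore decreasing in \<open>p\<close>: replacing a
step up by a step down can only lower it.  Letting \<open>N \<rightarrow> \<infinity>\<close> gives \<open>P(M > m)\<close>.\<close>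

section \<open>The walk at the ends of service attempts\<close>

text \<open>All inputs of a sample path in one vector: service draws \<open>Inl (Inl j)\<close>, interarrival
times \<open>Inl (Inr k)\<close> and batch sizes \<open>Inr k\<close>.\<close>

type_synonym input_index = "(nat + nat) + nat"

definition shift_service :: "input_index \<Rightarrow> input_index" where
  "shift_service i = (case i of Inl (Inl j) \<Rightarrow> Inl (Inl (Suc j)) | _ \<Rightarrow> i)"

definition shift_arrival :: "input_index \<Rightarrow> input_index" where
  "shift_arrival i = (case i of Inl (Inr k) \<Rightarrow> Inl (Inr (Suc k)) | _ \<Rightarrow> i)"

definition shift_batch :: "input_index \<Rightarrow> input_index" where
  "shift_batch i = (case i of Inr k \<Rightarrow> Inr (Suc k) | _ \<Rightarrow> i)"

lemma shift_simps [simp]: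
  "shift_service (Inl (Inl j)) = Inl (Inl (Suc j))"
  "shift_service (Inl (Inr k)) = Inl (Inr k)" "shift_service (Inr k) = Inr k"
  "shift_arrival (Inl (Inl j)) = Inl (Inl j)"
  "shift_arrival (Inl (Inr k)) = Inl (Inr (Suc k))" "shift_arrival (Inr k) = Inr k"
  "shift_batch (Inl (Inl j)) = Inl (Inl j)"
  "shift_batch (Inl (Inr k)) = Inl (Inr k)" "shift_batch (Inr k) = Inr (Suc k)"
  by (simp_all add: shift_service_def shift_arrival_def shift_batch_def)

lemma inj_shift: "inj shift_service" "inj shift_arrival" "inj shift_batch"
  unfolding inj_def shift_service_def shift_arrival_def shift_batch_def
  by (auto split: sum.splits)

lemma shift_commute:
  "shift_service \<circ> shift_arrival = shift_arrival \<circ> shift_service"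
  "shift_arrival \<circ> shift_batch = shift_batch \<circ> shift_arrival"
  by (auto simp: fun_eq_iff shift_service_def shift_arrival_def shift_batch_def split: sum.splits)

text \<open>\<open>exceeds_within m N n r z\<close>: starting with \<open>n\<close> customers, residual time \<open>r\<close> to the next
batch and unused inputs \<open>z\<close>, the number of customers exceeds \<open>m\<close> within \<open>N\<close> attempts.\<close>

fun exceeds_within :: "nat \<Rightarrow> nat \<Rightarrow> nat \<Rightarrow> real \<Rightarrow> (input_index \<Rightarrow> real) \<Rightarrow> bool" where
  "exceeds_within m 0 n r z = (m < n)"
| "exceeds_within m (Suc N) n r z = (m < n \<or> (n \<noteq> 0 \<and>
     (if z (Inl (Inl 0)) < r
      then exceeds_within m N (n - 1) (r - z (Inl (Inl 0))) (z \<circ> shift_service)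
      else (\<exists>\<beta>. z (Inr 0) = real \<beta> \<and> exceeds_within m N (n + \<beta>) (z (Inl (Inr 0)))
                  (z \<circ> shift_service \<circ> shift_arrival \<circ> shift_batch)))))"

definition input_vector ::
    "(nat \<Rightarrow> real) \<Rightarrow> (nat \<Rightarrow> real) \<Rightarrow> (nat \<Rightarrow> nat) \<Rightarrow> nat \<Rightarrow> nat \<Rightarrow> input_index \<Rightarrow> real" where
  "input_vector s e b j k i =
     (case i of Inl (Inl x) \<Rightarrow> s (x + j) | Inl (Inr x) \<Rightarrow> e (x + k) | Inr x \<Rightarrow> real (b (x + k)))"

lemma input_vector_shift_service:
  "input_vector s e b j k \<circ> shift_service = input_vector s e b (Suc j) k"
  by (auto simp: fun_eq_iff input_vector_def shift_service_def split: sum.splits)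

lemma input_vector_shift_arrival_batch:
  "input_vector s e b j k \<circ> shift_arrival \<circ> shift_batch = input_vector s e b j (Suc k)"
  by (auto simp: fun_eq_iff input_vector_def shift_arrival_def shift_batch_def split: sum.splits)

lemma lcfs_step_funpow_empty: "(lcfs_step s e b ^^ i) (0, r, j, k) = (0, r, j, k)"
  by (induction i) auto

lemma lcfs_exceeds_iff_exceeds_within:
  "(\<exists>i\<le>N. m < fst ((lcfs_step s e b ^^ i) (n, r, j, k)))
     \<longleftrightarrow> exceeds_within m N n r (input_vector s e b j k)"
proof (induction N arbitrary: n r j k)
  case 0
  then show ?case by simp
next
  case (Suc N)
  have ex_Suc: "(\<exists>i\<le>Suc N. P i) \<longleftrightarrow> P 0 \<or> (\<exists>i\<le>N. P (Suc i))" for P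
    by (metis Suc_le_mono not0_implies_Suc zero_le)
  have funpow_Suc: "(lcfs_step s e b ^^ Suc i) x = (lcfs_step s e b ^^ i) (lcfs_step s e b x)" for i x
    by (simp only: funpow_Suc_right comp_def)
  show ?case
  proof (cases "n = 0")
    case True
    then show ?thesis by (simp add: lcfs_step_funpow_empty)
  next
    case False
    have "input_vector s e b j k (Inl (Inl 0)) = s j" "input_vector s e b j k (Inl (Inr 0)) = e k"
      "input_vector s e b j k (Inr 0) = real (b k)"
      by (simp_all add: input_vector_def)
    with False show ?thesis
      unfolding ex_Suc funpow_Suc
      by (simp add: Suc.IH input_vector_shift_service input_vector_shift_arrival_batch)
  qed
qed

lemma measurable_reindex:
  assumes "\<And>i. \<sigma> i \<in> K"
  shows "(\<lambda>w. w \<circ> \<sigma>) \<in> measurable (PiM K (\<lambda>_. N)) (PiM UNIV (\<lambda>_. N))"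
proof -
  have "(\<lambda>w i. w (\<sigma> i)) \<in> measurable (PiM K (\<lambda>_. N)) (PiM UNIV (\<lambda>_. N))"
    by (rule measurable_PiM_single')
      (use assms in \<open>auto intro: measurable_component_singleton simp: space_PiM PiE_iff\<close>)
  then show ?thesis by (simp add: comp_def)
qed

lemma measurable_comp_reindex:
  assumes "g \<in> measurable M (PiM K (\<lambda>_. N))" "\<And>i. \<sigma> i \<in> K"
  shows "(\<lambda>x. g x \<circ> \<sigma>) \<in> measurable M (PiM UNIV (\<lambda>_. N))"
proof -
  have "(\<lambda>w. w \<circ> \<sigma>) \<in> measurable (PiM K (\<lambda>_. N)) (PiM UNIV (\<lambda>_. N))"
    by (rule measurable_reindex) (rule assms(2))
  from measurable_compose[OF assms(1) this] show ?thesis by simp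
qed

lemma measurable_comp_reindex_UNIV [measurable (raw)]:
  "f \<in> measurable M (PiM UNIV (\<lambda>_. N)) \<Longrightarrow> (\<lambda>x. f x \<circ> \<sigma>) \<in> measurable M (PiM UNIV (\<lambda>_. N))"
  by (rule measurable_comp_reindex) auto

lemma measurable_exceeds_within:
  "Measurable.pred (borel \<Otimes>\<^sub>M PiM UNIV (\<lambda>_::input_index. borel :: real measure))
     (\<lambda>(r, z). exceeds_within m N n r z)"
proof (induction N arbitrary: n)
  case 0
  then show ?case by simp
next
  case (Suc N)
  have [measurable (raw)]: "Measurable.pred M (\<lambda>x. exceeds_within m N n' (f x) (g x))"
    if "f \<in> borel_measurable M" "g \<in> measurable M (PiM UNIV (\<lambda>_::input_index. borel :: real measure))"
    for M f g n'
    using measurable_compose[OF measurable_Pair[OF that] Suc.IH[of n']] by simp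
  show ?case
    unfolding exceeds_within.simps split_beta' by measurable
qed

lemma measurable_exceeds_within' [measurable (raw)]:
  assumes "f \<in> borel_measurable M" "g \<in> measurable M (PiM UNIV (\<lambda>_::input_index. borel :: real measure))"
  shows "Measurable.pred M (\<lambda>x. exceeds_within m N n (f x) (g x))"
  using measurable_compose[OF measurable_Pair[OF assms] measurable_exceeds_within[of m N n]] by simp

section \<open>Exceedance probabilities of the walk\<close>

fun exceed_prob :: "real \<Rightarrow> (nat \<Rightarrow> real) \<Rightarrow> nat \<Rightarrow> nat \<Rightarrow> nat \<Rightarrow> real" where
  "exceed_prob p pB m 0 n = (if m < n then 1 else 0)"
| "exceed_prob p pB m (Suc N) n = (if m < n then 1 else if n = 0 then 0
     else p * exceed_prob p pB m N (n - 1) + (1 - p) * (\<Sum>\<beta>. pB \<beta> * exceed_prob p pB m N (n + \<beta>)))"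

locale batch_pmf =
  fixes pB :: "nat \<Rightarrow> real"
  assumes pB_nonneg: "\<And>\<beta>. 0 \<le> pB \<beta>" and pB_sums: "pB sums 1"
begin

lemma summable_weighted:
  assumes "\<And>\<beta>. 0 \<le> f \<beta>" "\<And>\<beta>. f \<beta> \<le> 1"
  shows "summable (\<lambda>\<beta>. pB \<beta> * f \<beta>)"
proof (rule summable_comparison_test'[where g=pB])
  show "summable pB" using pB_sums by (simp add: sums_summable)
  show "norm (pB \<beta> * f \<beta>) \<le> pB \<beta>" for \<beta>
    using assms pB_nonneg[of \<beta>] by (simp add: abs_mult mult_left_le)
qed

lemma suminf_weighted_const: "(\<Sum>\<beta>. pB \<beta> * a) = a"
  using sums_mult2[OF pB_sums, of a] sums_unique by fastforce

lemma suminf_weighted_mono: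
  assumes "\<And>\<beta>. 0 \<le> f \<beta>" "\<And>\<beta>. f \<beta> \<le> g \<beta>" "\<And>\<beta>. g \<beta> \<le> 1"
  shows "(\<Sum>\<beta>. pB \<beta> * f \<beta>) \<le> (\<Sum>\<beta>. pB \<beta> * g \<beta>)"
  using assms order_trans[OF assms(1,2)] order_trans[OF assms(2,3)]
  by (intro suminf_le summable_weighted mult_left_mono pB_nonneg) auto

lemma suminf_weighted_bounds:
  assumes "\<And>\<beta>. 0 \<le> f \<beta>" "\<And>\<beta>. f \<beta> \<le> 1"
  shows "0 \<le> (\<Sum>\<beta>. pB \<beta> * f \<beta>)" "(\<Sum>\<beta>. pB \<beta> * f \<beta>) \<le> 1"
proof -
  show "0 \<le> (\<Sum>\<beta>. pB \<beta> * f \<beta>)"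
    by (rule suminf_nonneg[OF summable_weighted[OF assms]]) (use assms pB_nonneg in auto)
  have "(\<Sum>\<beta>. pB \<beta> * f \<beta>) \<le> (\<Sum>\<beta>. pB \<beta> * 1)"
    by (rule suminf_weighted_mono) (use assms in auto)
  then show "(\<Sum>\<beta>. pB \<beta> * f \<beta>) \<le> 1"
    using suminf_weighted_const[of 1] by linarith
qed

lemma exceed_prob_bounds:
  assumes "0 \<le> p" "p \<le> 1"
  shows "0 \<le> exceed_prob p pB m N n" "exceed_prob p pB m N n \<le> 1"
proof (induction N arbitrary: n)
  case (Suc N)
  { case 1
    have "0 \<le> (\<Sum>\<beta>. pB \<beta> * exceed_prob p pB m N (n + \<beta>))"
      using Suc.IH by (intro suminf_weighted_bounds)
    with Suc.IH(1)[of "n - 1"] assms show ?case by simp }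
  { case 2
    have "(\<Sum>\<beta>. pB \<beta> * exceed_prob p pB m N (n + \<beta>)) \<le> 1"
      using Suc.IH by (intro suminf_weighted_bounds)
    then have "p * exceed_prob p pB m N (n - 1)
               + (1 - p) * (\<Sum>\<beta>. pB \<beta> * exceed_prob p pB m N (n + \<beta>)) \<le> p * 1 + (1 - p) * 1"
      using Suc.IH(2)[of "n - 1"] assms by (intro add_mono mult_left_mono) auto
    then show ?case by simp }
qed simp_all

lemma exceed_prob_mono:
  assumes "0 \<le> p" "p \<le> 1"
  shows "n \<le> n' \<Longrightarrow> exceed_prob p pB m N n \<le> exceed_prob p pB m N n'"
proof (induction N arbitrary: n n')
  case 0
  then show ?case by simp
next
  case (Suc N)
  note bounds = exceed_prob_bounds[OF assms]
  show ?case
  proof (cases "m < n' \<or> n = 0")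
    case True
    then consider "exceed_prob p pB m (Suc N) n' = 1" | "exceed_prob p pB m (Suc N) n = 0"
      by fastforce
    then show ?thesis using bounds(1)[of m "Suc N" n'] bounds(2)[of m "Suc N" n] by cases linarith+
  next
    case False
    with Suc.prems have "\<not> m < n" "n \<noteq> 0" "n' \<noteq> 0" by auto
    have "(\<Sum>\<beta>. pB \<beta> * exceed_prob p pB m N (n + \<beta>)) \<le> (\<Sum>\<beta>. pB \<beta> * exceed_prob p pB m N (n' + \<beta>))"
      using Suc bounds by (intro suminf_weighted_mono) auto
    moreover have "exceed_prob p pB m N (n - 1) \<le> exceed_prob p pB m N (n' - 1)"
      using Suc by auto
    ultimately show ?thesis
      using False \<open>\<not> m < n\<close> \<open>n \<noteq> 0\<close> \<open>n' \<noteq> 0\<close> assms by (auto intro!: add_mono mult_left_mono)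
  qed
qed

text \<open>Moving weight from the steps up to the step down can only lower the exceedance
probability, because by monotonicity in the starting point the step down leads below every
step up.\<close>

lemma exceed_prob_antimono:
  assumes "0 \<le> p" "p \<le> p'" "p' \<le> 1"
  shows "exceed_prob p' pB m N n \<le> exceed_prob p pB m N n"
proof (induction N arbitrary: n)
  case 0
  then show ?case by simp
next
  case (Suc N)
  note bounds = exceed_prob_bounds[of p] exceed_prob_bounds[of p']
  define down where "down = exceed_prob p pB m N (n - 1)"
  define down' where "down' = exceed_prob p' pB m N (n - 1)"
  define up where "up = (\<Sum>\<beta>. pB \<beta> * exceed_prob p pB m N (n + \<beta>))"
  define up' where "up' = (\<Sum>\<beta>. pB \<beta> * exceed_prob p' pB m N (n + \<beta>))"
  have "up' \<le> up" unfolding up_def up'_def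
    using Suc bounds assms by (intro suminf_weighted_mono) auto
  moreover have "down' \<le> down"
    using Suc unfolding down_def down'_def by auto
  moreover have "down \<le> up"
  proof -
    have "(\<Sum>\<beta>. pB \<beta> * down) \<le> up" unfolding up_def down_def
      using exceed_prob_mono[of p "n - 1" "n + _"] bounds assms
      by (intro suminf_weighted_mono) auto
    then show ?thesis by (simp add: suminf_weighted_const)
  qed
  ultimately have "p' * down' + (1 - p') * up' \<le> p' * down + (1 - p') * up"
    using assms by (intro add_mono mult_left_mono) auto
  also have "\<dots> \<le> p * down + (1 - p) * up"
  proof -
    have "(p' - p) * down \<le> (p' - p) * up" using \<open>down \<le> up\<close> assms by (intro mult_left_mono) auto
    then show ?thesis by (simp add: algebra_simps)
  qed
  finally show ?case by (simp add: down_def down'_def up_def up'_def)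
qed

lemma lim_exceed_prob_antimono:
  assumes "0 \<le> p" "p \<le> p'" "p' \<le> 1"
    and "(\<lambda>N. \<Sum>\<beta>. pB \<beta> * exceed_prob p pB m N \<beta>) \<longlonglongrightarrow> x"
    and "(\<lambda>N. \<Sum>\<beta>. pB \<beta> * exceed_prob p' pB m N \<beta>) \<longlonglongrightarrow> x'"
  shows "x' \<le> x"
proof (rule LIMSEQ_le[OF assms(5,4)])
  show "\<exists>N0. \<forall>N\<ge>N0. (\<Sum>\<beta>. pB \<beta> * exceed_prob p' pB m N \<beta>) \<le> (\<Sum>\<beta>. pB \<beta> * exceed_prob p pB m N \<beta>)"
    using assms(1-3)
    by (intro exI allI impI suminf_weighted_mono exceed_prob_antimono exceed_prob_bounds) auto
qed

end

section \<open>Independence and the exponential race\<close>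

lemma (in prob_space) indep_sets_reindex:
  assumes ind: "indep_sets F I" and inj: "inj_on \<sigma> J" and sub: "\<sigma> ` J \<subseteq> I"
  shows "indep_sets (\<lambda>j. F (\<sigma> j)) J"
  unfolding indep_sets_def
proof (intro conjI ballI allI impI)
  fix j assume "j \<in> J"
  then show "F (\<sigma> j) \<subseteq> events" using ind sub by (auto simp: indep_sets_def)
next
  fix K A assume K: "K \<subseteq> J" "K \<noteq> {}" "finite K" and A: "A \<in> Pi K (\<lambda>j. F (\<sigma> j))"
  have injK: "inj_on \<sigma> K" using inj K(1) by (rule inj_on_subset)
  define B where "B i = A (the_inv_into K \<sigma> i)" for i
  have BA: "B (\<sigma> j) = A j" if "j \<in> K" for j
    unfolding B_def using the_inv_into_f_f[OF injK that] by simp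
  have "B \<in> Pi (\<sigma> ` K) F" using A BA by auto
  moreover have "\<sigma> ` K \<subseteq> I" "\<sigma> ` K \<noteq> {}" "finite (\<sigma> ` K)" using K sub by auto
  ultimately have "prob (\<Inter>i\<in>\<sigma> ` K. B i) = (\<Prod>i\<in>\<sigma> ` K. prob (B i))"
    using ind unfolding indep_sets_def by blast
  moreover have "(\<Inter>i\<in>\<sigma> ` K. B i) = (\<Inter>j\<in>K. A j)" using BA by auto
  moreover have "(\<Prod>i\<in>\<sigma> ` K. prob (B i)) = (\<Prod>j\<in>K. prob (A j))"
    using BA by (simp add: prod.reindex[OF injK])
  ultimately show "prob (\<Inter>j\<in>K. A j) = (\<Prod>j\<in>K. prob (A j))" by simp
qed

lemma (in prob_space) indep_vars_reindex:
  assumes ind: "indep_vars M' X I" and inj: "inj_on \<sigma> J" and sub: "\<sigma> ` J \<subseteq> I"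
  shows "indep_vars (\<lambda>j. M' (\<sigma> j)) (\<lambda>j. X (\<sigma> j)) J"
  using ind sub indep_sets_reindex[OF _ inj sub, of "\<lambda>i. {X i -` A \<inter> space M |A. A \<in> sets (M' i)}"]
  unfolding indep_vars_def2 by auto

lemma (in prob_space) nn_integral_indep_var:
  assumes ind: "indep_var MX X MY Y" and g[measurable]: "g \<in> borel_measurable (MX \<Otimes>\<^sub>M MY)"
  shows "(\<integral>\<^sup>+\<omega>. g (X \<omega>, Y \<omega>) \<partial>M) = (\<integral>\<^sup>+y. (\<integral>\<^sup>+\<omega>. g (X \<omega>, y) \<partial>M) \<partial>distr M MY Y)"
proof -
  have [measurable]: "X \<in> measurable M MX" "Y \<in> measurable M MY"
    using indep_var_rv1[OF ind] indep_var_rv2[OF ind] by auto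
  interpret DX: prob_space "distr M MX X" by (rule prob_space_distr) simp
  interpret DY: prob_space "distr M MY Y" by (rule prob_space_distr) simp
  interpret D: pair_prob_space "distr M MX X" "distr M MY Y" ..
  have g_distr: "g \<in> borel_measurable (distr M MX X \<Otimes>\<^sub>M distr M MY Y)"
    by (subst measurable_cong_sets[OF sets_pair_measure_cong[OF sets_distr sets_distr] refl]) simp
  have "(\<integral>\<^sup>+\<omega>. g (X \<omega>, Y \<omega>) \<partial>M) = integral\<^sup>N (distr M (MX \<Otimes>\<^sub>M MY) (\<lambda>x. (X x, Y x))) g"
    by (subst nn_integral_distr) auto
  also have "\<dots> = integral\<^sup>N (distr M MX X \<Otimes>\<^sub>M distr M MY Y) g"
    using ind by (simp add: indep_var_distribution_eq)
  also have "\<dots> = (\<integral>\<^sup>+y. (\<integral>\<^sup>+x. g (x, y) \<partial>distr M MX X) \<partial>distr M MY Y)"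
    by (rule D.nn_integral_snd[symmetric, OF g_distr])
  also have "\<dots> = (\<integral>\<^sup>+y. (\<integral>\<^sup>+\<omega>. g (X \<omega>, y) \<partial>M) \<partial>distr M MY Y)"
    by (intro nn_integral_cong, subst nn_integral_distr) auto
  finally show ?thesis .
qed

lemma (in prob_space) prob_indep_var_conj:
  assumes ind: "indep_var MX X MY Y"
    and [measurable]: "Measurable.pred MX P1" "Measurable.pred MY P2"
  shows "prob {\<omega>\<in>space M. P1 (X \<omega>) \<and> P2 (Y \<omega>)} = prob {\<omega>\<in>space M. P1 (X \<omega>)} * prob {\<omega>\<in>space M. P2 (Y \<omega>)}"
proof -
  have X: "X \<in> measurable M MX" and Y: "Y \<in> measurable M MY"
    using indep_var_rv1[OF ind] indep_var_rv2[OF ind] by auto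
  have "prob ((\<lambda>x. (X x, Y x)) -` ({x\<in>space MX. P1 x} \<times> {x\<in>space MY. P2 x}) \<inter> space M) =
    prob (X -` {x\<in>space MX. P1 x} \<inter> space M) * prob (Y -` {x\<in>space MY. P2 x} \<inter> space M)"
    by (rule indep_varD[OF ind]) measurable
  moreover have "(\<lambda>x. (X x, Y x)) -` ({x\<in>space MX. P1 x} \<times> {x\<in>space MY. P2 x}) \<inter> space M
      = {\<omega>\<in>space M. P1 (X \<omega>) \<and> P2 (Y \<omega>)}"
    "X -` {x\<in>space MX. P1 x} \<inter> space M = {\<omega>\<in>space M. P1 (X \<omega>)}"
    "Y -` {x\<in>space MY. P2 x} \<inter> space M = {\<omega>\<in>space M. P2 (Y \<omega>)}"
    using measurable_space[OF X] measurable_space[OF Y] by auto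
  ultimately show ?thesis by simp
qed

lemma emeasure_Collect_eq_nn_integral:
  assumes [measurable]: "Measurable.pred M P"
  shows "emeasure M {x\<in>space M. P x} = (\<integral>\<^sup>+x. of_bool (P x) \<partial>M)"
proof -
  have "emeasure M {x\<in>space M. P x} = (\<integral>\<^sup>+x. indicator {x\<in>space M. P x} x \<partial>M)" by simp
  also have "\<dots> = (\<integral>\<^sup>+x. of_bool (P x) \<partial>M)" by (intro nn_integral_cong) (auto simp: indicator_def)
  finally show ?thesis .
qed

lemma nn_integral_exponential_density_shift:
  fixes G :: "real \<Rightarrow> ennreal"
  assumes "0 \<le> s" "0 < lam" and [measurable]: "G \<in> borel_measurable borel"
  shows "(\<integral>\<^sup>+x. ennreal (exponential_density lam x) * (of_bool (s < x) * G (x - s)) \<partial>lborel)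
       = ennreal (exp (- lam * s)) * (\<integral>\<^sup>+x. ennreal (exponential_density lam x) * G x \<partial>lborel)"
proof -
  let ?f = "\<lambda>x. ennreal (exponential_density lam x) * (of_bool (s < x) * G (x - s))"
  have "(\<integral>\<^sup>+x. ?f x \<partial>lborel) = (\<integral>\<^sup>+u. ?f (s + u) \<partial>lborel)"
    by (subst lborel_distr_plus[symmetric, of s], subst nn_integral_distr) auto
  also have "\<dots> = (\<integral>\<^sup>+u. ennreal (exp (- lam * s)) * (ennreal (exponential_density lam u) * G u) \<partial>lborel)"
  proof (rule nn_integral_cong_AE)
    show "AE u in lborel. ?f (s + u)
        = ennreal (exp (- lam * s)) * (ennreal (exponential_density lam u) * G u)"
      using AE_lborel_singleton[of 0]
    proof eventually_elim
      case (elim u)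
      show ?case
      proof (cases "0 < u")
        case True
        have "exponential_density lam (s + u) = exp (- lam * s) * exponential_density lam u"
          using True assms by (simp add: exponential_density_def exp_add[symmetric] algebra_simps)
        with True assms show ?thesis
          by (simp add: ennreal_mult exponential_density_def ac_simps)
      next
        case False
        with elim show ?thesis by (simp add: exponential_density_def)
      qed
    qed
  qed
  also have "\<dots> = ennreal (exp (- lam * s)) * (\<integral>\<^sup>+x. ennreal (exponential_density lam x) * G x \<partial>lborel)"
    by (rule nn_integral_cmult) (simp add: exponential_density_def)
  finally show ?thesis .
qed

text \<open>Memorylessness: a nonnegative \<open>S\<close> independent of an exponential clock \<open>E\<close> beats the
clock with probability \<open>E(e^{-\<lambda>S})\<close>, and the overshoot \<open>E - S\<close> is again exponential.\<close>

lemma (in prob_space) nn_integral_exponential_race: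
  assumes ind: "indep_var borel E borel S"
    and E: "distributed M lborel E (exponential_density lam)" and "0 < lam"
    and S_nonneg: "AE \<omega> in M. 0 \<le> S \<omega>"
    and G[measurable]: "G \<in> borel_measurable borel"
  shows "(\<integral>\<^sup>+\<omega>. of_bool (S \<omega> < E \<omega>) * G (E \<omega> - S \<omega>) \<partial>M)
       = (\<integral>\<^sup>+\<omega>. ennreal (exp (- lam * S \<omega>)) \<partial>M) * (\<integral>\<^sup>+\<omega>. G (E \<omega>) \<partial>M)"
proof -
  have [measurable]: "S \<in> borel_measurable M" using indep_var_rv2[OF ind] .
  have E_density: "(\<integral>\<^sup>+\<omega>. h (E \<omega>) \<partial>M) = (\<integral>\<^sup>+x. ennreal (exponential_density lam x) * h x \<partial>lborel)"
    if [measurable]: "h \<in> borel_measurable borel" for h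
    using E by (subst distributed_nn_integral[symmetric, OF E]) (auto simp: exponential_density_def)
  have "(\<integral>\<^sup>+\<omega>. of_bool (S \<omega> < E \<omega>) * G (E \<omega> - S \<omega>) \<partial>M)
      = (\<integral>\<^sup>+s. (\<integral>\<^sup>+\<omega>. of_bool (s < E \<omega>) * G (E \<omega> - s) \<partial>M) \<partial>distr M borel S)"
    using nn_integral_indep_var[OF ind, of "\<lambda>(e, s). of_bool (s < e) * G (e - s)"] by simp
  also have "\<dots> = (\<integral>\<^sup>+s. ennreal (exp (- lam * s)) * (\<integral>\<^sup>+\<omega>. G (E \<omega>) \<partial>M) \<partial>distr M borel S)"
  proof (rule nn_integral_cong_AE)
    have "AE s in distr M borel S. 0 \<le> s"
      using S_nonneg by (subst AE_distr_iff) auto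
    then show "AE s in distr M borel S. (\<integral>\<^sup>+\<omega>. of_bool (s < E \<omega>) * G (E \<omega> - s) \<partial>M)
        = ennreal (exp (- lam * s)) * (\<integral>\<^sup>+\<omega>. G (E \<omega>) \<partial>M)"
    proof eventually_elim
      case (elim s)
      have "(\<integral>\<^sup>+\<omega>. of_bool (s < E \<omega>) * G (E \<omega> - s) \<partial>M)
          = (\<integral>\<^sup>+x. ennreal (exponential_density lam x) * (of_bool (s < x) * G (x - s)) \<partial>lborel)"
        by (rule E_density) measurable
      also have "\<dots> = ennreal (exp (- lam * s)) * (\<integral>\<^sup>+\<omega>. G (E \<omega>) \<partial>M)"
        by (simp add: nn_integral_exponential_density_shift[OF elim \<open>0 < lam\<close> G] E_density)
      finally show ?case .
    qed
  qed
  also have "\<dots> = (\<integral>\<^sup>+\<omega>. ennreal (exp (- lam * S \<omega>)) \<partial>M) * (\<integral>\<^sup>+\<omega>. G (E \<omega>) \<partial>M)"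
    by (subst nn_integral_multc) (auto simp: nn_integral_distr)
  finally show ?thesis .
qed

text \<open>The hypotheses of \<open>lcfs_input\<close> for a single vector of inputs; in this form they
are preserved by the shifts, so that the analysis of the first attempt can be iterated.\<close>

definition input_family :: "'w measure \<Rightarrow> real \<Rightarrow> real measure \<Rightarrow> (nat \<Rightarrow> real) \<Rightarrow>
    (input_index \<Rightarrow> 'w \<Rightarrow> real) \<Rightarrow> bool" where
  "input_family Q lam \<mu>S pB Z \<longleftrightarrow> prob_space Q \<and> 0 < lam \<and>
     prob_space.indep_vars Q (\<lambda>_. borel) Z UNIV \<and>
     (\<forall>j. distr Q borel (Z (Inl (Inl j))) = \<mu>S) \<and> (AE x in \<mu>S. 0 \<le> x) \<and>
     (\<forall>k. distributed Q lborel (Z (Inl (Inr k))) (exponential_density lam)) \<and>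
     (\<forall>k \<beta>. measure Q {\<omega> \<in> space Q. Z (Inr k) \<omega> = real \<beta>} = pB \<beta>)"

definition completion_prob :: "real measure \<Rightarrow> real \<Rightarrow> real" where
  "completion_prob \<mu>S lam = (\<integral>x. exp (- lam * x) \<partial>\<mu>S)"

lemma input_family_prob_space: "input_family Q lam \<mu>S pB Z \<Longrightarrow> prob_space Q"
  by (simp add: input_family_def)

lemma input_family_measurable:
  assumes "input_family Q lam \<mu>S pB Z"
  shows "Z i \<in> borel_measurable Q"
proof -
  interpret prob_space Q using assms by (rule input_family_prob_space)
  show ?thesis using assms by (simp add: input_family_def indep_vars_def)
qed

lemma input_family_measurable_vector:
  assumes "input_family Q lam \<mu>S pB Z"
  shows "(\<lambda>\<omega> i. Z i \<omega>) \<in> measurable Q (PiM UNIV (\<lambda>_. borel))"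
  by (rule measurable_PiM_single') (auto intro: input_family_measurable[OF assms])

lemma input_family_reindex:
  assumes Z: "input_family Q lam \<mu>S pB Z" and "inj \<sigma>"
    and "\<And>j. \<exists>j'. \<sigma> (Inl (Inl j)) = Inl (Inl j')"
    and "\<And>k. \<exists>k'. \<sigma> (Inl (Inr k)) = Inl (Inr k')"
    and "\<And>k. \<exists>k'. \<sigma> (Inr k) = Inr k'"
  shows "input_family Q lam \<mu>S pB (\<lambda>i. Z (\<sigma> i))"
proof -
  interpret prob_space Q using Z by (rule input_family_prob_space)
  have "indep_vars (\<lambda>_. borel) (\<lambda>i. Z (\<sigma> i)) UNIV"
    using indep_vars_reindex[of "\<lambda>_. borel" Z UNIV \<sigma> UNIV] Z \<open>inj \<sigma>\<close>
    by (simp add: input_family_def)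
  with assms(3-5) show ?thesis using Z unfolding input_family_def by metis
qed

lemma input_family_shift:
  assumes "input_family Q lam \<mu>S pB Z"
  shows "input_family Q lam \<mu>S pB (\<lambda>i. Z (shift_service i))"
    "input_family Q lam \<mu>S pB (\<lambda>i. Z (shift_arrival i))"
    "input_family Q lam \<mu>S pB (\<lambda>i. Z (shift_batch i))"
  by (rule input_family_reindex[OF assms]; simp add: inj_shift)+

lemma input_family_indep_blocks:
  assumes "input_family Q lam \<mu>S pB Z" "A \<inter> B = {}"
  shows "prob_space.indep_var Q (PiM A (\<lambda>_. borel)) (\<lambda>\<omega>. restrict (\<lambda>i. Z i \<omega>) A)
                                (PiM B (\<lambda>_. borel)) (\<lambda>\<omega>. restrict (\<lambda>i. Z i \<omega>) B)"
proof -
  interpret prob_space Q using assms(1) by (rule input_family_prob_space)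
  show ?thesis using assms by (intro indep_var_restrict) (auto simp: input_family_def)
qed

lemma input_family_indep_pair:
  assumes "input_family Q lam \<mu>S pB Z" "i \<noteq> j"
  shows "prob_space.indep_var Q borel (Z i) borel (Z j)"
proof -
  interpret prob_space Q using assms(1) by (rule input_family_prob_space)
  have "indep_var borel ((\<lambda>x. x i) \<circ> (\<lambda>\<omega>. restrict (\<lambda>i. Z i \<omega>) {i}))
                  borel ((\<lambda>x. x j) \<circ> (\<lambda>\<omega>. restrict (\<lambda>i. Z i \<omega>) {j}))"
    using assms by (intro indep_var_compose[OF input_family_indep_blocks[OF assms(1)]]) auto
  then show ?thesis by (simp add: comp_def)
qed

lemma input_family_completion_prob:
  assumes Z: "input_family Q lam \<mu>S pB Z"
  shows "(\<integral>\<^sup>+\<omega>. ennreal (exp (- lam * Z (Inl (Inl 0)) \<omega>)) \<partial>Q) = ennreal (completion_prob \<mu>S lam)"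
    and "0 \<le> completion_prob \<mu>S lam" "completion_prob \<mu>S lam \<le> 1"
proof -
  interpret prob_space Q using Z by (rule input_family_prob_space)
  have \<mu>S: "\<mu>S = distr Q borel (Z (Inl (Inl 0)))" and "0 < lam" and nonneg: "AE x in \<mu>S. 0 \<le> x"
    using Z by (simp_all add: input_family_def)
  have [measurable]: "Z (Inl (Inl 0)) \<in> borel_measurable Q" by (rule input_family_measurable[OF Z])
  interpret S: prob_space \<mu>S unfolding \<mu>S by (rule prob_space_distr) simp
  have bounded: "AE x in \<mu>S. exp (- lam * x) \<le> 1"
    using nonneg by eventually_elim (use \<open>0 < lam\<close> in simp)
  have int: "integrable \<mu>S (\<lambda>x. exp (- lam * x))"
  proof (rule Bochner_Integration.integrable_bound[where f="\<lambda>_. 1::real"])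
    show "(\<lambda>x. exp (- lam * x)) \<in> borel_measurable \<mu>S" unfolding \<mu>S by simp
  qed (use bounded in auto)
  have "(\<integral>\<^sup>+x. ennreal (exp (- lam * x)) \<partial>\<mu>S) = ennreal (completion_prob \<mu>S lam)"
    unfolding completion_prob_def by (rule nn_integral_eq_integral[OF int]) simp
  then show "(\<integral>\<^sup>+\<omega>. ennreal (exp (- lam * Z (Inl (Inl 0)) \<omega>)) \<partial>Q) = ennreal (completion_prob \<mu>S lam)"
    by (simp add: \<mu>S nn_integral_distr)
  show "0 \<le> completion_prob \<mu>S lam" unfolding completion_prob_def by simp
  have "completion_prob \<mu>S lam \<le> (\<integral>x. 1 \<partial>\<mu>S)" unfolding completion_prob_def
    by (rule integral_mono_AE[OF int]) (use bounded in auto)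
  then show "completion_prob \<mu>S lam \<le> 1" by (simp add: S.prob_space)
qed

definition race_complement :: "input_index set" where
  "race_complement = UNIV - {Inl (Inl 0), Inl (Inr 0)}"

definition batch_complement :: "input_index set" where
  "batch_complement = UNIV - {Inr 0}"

lemma restrict_comp: "(\<And>i. \<sigma> i \<in> K) \<Longrightarrow> restrict f K \<circ> \<sigma> = f \<circ> \<sigma>"
  by (auto simp: fun_eq_iff)

lemma input_family_race:
  assumes Z: "input_family Q lam \<mu>S pB Z" and [measurable]: "Measurable.pred borel G"
  shows "emeasure Q {\<omega>\<in>space Q. Z (Inl (Inl 0)) \<omega> < Z (Inl (Inr 0)) \<omega> \<and>
                                  G (Z (Inl (Inr 0)) \<omega> - Z (Inl (Inl 0)) \<omega>)}
       = ennreal (completion_prob \<mu>S lam) * emeasure Q {\<omega>\<in>space Q. G (Z (Inl (Inr 0)) \<omega>)}"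
proof -
  interpret prob_space Q using Z by (rule input_family_prob_space)
  define S where "S = Z (Inl (Inl 0))"
  define E where "E = Z (Inl (Inr 0))"
  have [measurable]: "S \<in> borel_measurable Q" "E \<in> borel_measurable Q"
    unfolding S_def E_def by (rule input_family_measurable[OF Z])+
  have indep: "indep_var borel E borel S"
    unfolding S_def E_def by (rule input_family_indep_pair[OF Z]) simp
  have E_exp: "distributed Q lborel E (exponential_density lam)" and "0 < lam"
    using Z by (simp_all add: input_family_def E_def)
  have "AE x in distr Q borel S. 0 \<le> x" using Z unfolding input_family_def S_def by metis
  then have S_nonneg: "AE \<omega> in Q. 0 \<le> S \<omega>" by (subst (asm) AE_distr_iff) auto
  have "emeasure Q {\<omega>\<in>space Q. S \<omega> < E \<omega> \<and> G (E \<omega> - S \<omega>)}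
      = (\<integral>\<^sup>+\<omega>. of_bool (S \<omega> < E \<omega>) * of_bool (G (E \<omega> - S \<omega>)) \<partial>Q)"
    by (subst emeasure_Collect_eq_nn_integral) (auto intro!: nn_integral_cong)
  also have "\<dots> = (\<integral>\<^sup>+\<omega>. ennreal (exp (- lam * S \<omega>)) \<partial>Q) * (\<integral>\<^sup>+\<omega>. of_bool (G (E \<omega>)) \<partial>Q)"
    by (rule nn_integral_exponential_race[OF indep E_exp \<open>0 < lam\<close> S_nonneg,
          of "\<lambda>x. of_bool (G x)"]) measurable
  also have "\<dots> = ennreal (completion_prob \<mu>S lam) * emeasure Q {\<omega>\<in>space Q. G (E \<omega>)}"
    using input_family_completion_prob(1)[OF Z]
    by (subst emeasure_Collect_eq_nn_integral) (auto simp: S_def)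
  finally show ?thesis by (simp only: S_def E_def)
qed

text \<open>Conditionally on all other inputs, the first attempt is a race between the service
draw and an independent exponential clock.\<close>

lemma input_family_memoryless:
  assumes Z: "input_family Q lam \<mu>S pB Z"
    and F[measurable]: "Measurable.pred (borel \<Otimes>\<^sub>M PiM race_complement (\<lambda>_. borel)) (\<lambda>(u, w). F u w)"
  defines "W \<equiv> \<lambda>\<omega>. restrict (\<lambda>i. Z i \<omega>) race_complement"
  shows "emeasure Q {\<omega>\<in>space Q. Z (Inl (Inl 0)) \<omega> < Z (Inl (Inr 0)) \<omega> \<and>
                                  F (Z (Inl (Inr 0)) \<omega> - Z (Inl (Inl 0)) \<omega>) (W \<omega>)}
       = ennreal (completion_prob \<mu>S lam) * emeasure Q {\<omega>\<in>space Q. F (Z (Inl (Inr 0)) \<omega>) (W \<omega>)}"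
proof -
  interpret prob_space Q using Z by (rule input_family_prob_space)
  have [measurable]: "\<And>i. Z i \<in> borel_measurable Q" by (rule input_family_measurable[OF Z])
  have [measurable]: "W \<in> measurable Q (PiM race_complement (\<lambda>_. borel))"
    unfolding W_def by measurable
  have not_in: "Inl (Inl 0) \<notin> race_complement" "Inl (Inr 0) \<notin> race_complement"
    by (auto simp: race_complement_def)
  define \<Phi> where "\<Phi> w = (\<integral>\<^sup>+\<omega>. of_bool (F (Z (Inl (Inr 0)) \<omega>) w) \<partial>Q)" for w
  have race: "(\<integral>\<^sup>+\<omega>. of_bool (Z (Inl (Inl 0)) \<omega> < Z (Inl (Inr 0)) \<omega> \<and>
                            F (Z (Inl (Inr 0)) \<omega> - Z (Inl (Inl 0)) \<omega>) w) \<partial>Q)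
      = ennreal (completion_prob \<mu>S lam) * \<Phi> w"
    if w: "w \<in> space (PiM race_complement (\<lambda>_. borel))" for w
  proof -
    have Fw: "Measurable.pred borel (\<lambda>u. F u w)"
      using measurable_compose[OF measurable_Pair2'[OF w] F] by simp
    note [measurable] = Fw
    from input_family_race[OF Z Fw] show ?thesis
      by (simp add: \<Phi>_def emeasure_Collect_eq_nn_integral)
  qed
  have "emeasure Q {\<omega>\<in>space Q. Z (Inl (Inl 0)) \<omega> < Z (Inl (Inr 0)) \<omega> \<and>
                                F (Z (Inl (Inr 0)) \<omega> - Z (Inl (Inl 0)) \<omega>) (W \<omega>)}
      = (\<integral>\<^sup>+\<omega>. (\<lambda>(x, w). of_bool (x (Inl (Inl 0)) < x (Inl (Inr 0)) \<and>
                     F (x (Inl (Inr 0)) - x (Inl (Inl 0))) w) :: ennreal)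
             (restrict (\<lambda>i. Z i \<omega>) {Inl (Inl 0), Inl (Inr 0)}, W \<omega>) \<partial>Q)"
    by (subst emeasure_Collect_eq_nn_integral) auto
  also have "\<dots> = (\<integral>\<^sup>+w. ennreal (completion_prob \<mu>S lam) * \<Phi> w \<partial>distr Q (PiM race_complement (\<lambda>_. borel)) W)"
    unfolding W_def
    by (subst nn_integral_indep_var[OF input_family_indep_blocks[OF Z]])
      (auto simp: not_in intro!: nn_integral_cong race)
  also have "\<dots> = ennreal (completion_prob \<mu>S lam) * (\<integral>\<^sup>+w. \<Phi> w \<partial>distr Q (PiM race_complement (\<lambda>_. borel)) W)"
    unfolding \<Phi>_def by (rule nn_integral_cmult) measurable
  also have "(\<integral>\<^sup>+w. \<Phi> w \<partial>distr Q (PiM race_complement (\<lambda>_. borel)) W)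
      = (\<integral>\<^sup>+\<omega>. (\<lambda>(x, w). of_bool (F (x (Inl (Inr 0))) w) :: ennreal)
             (restrict (\<lambda>i. Z i \<omega>) {Inl (Inr 0)}, W \<omega>) \<partial>Q)"
    unfolding W_def \<Phi>_def
    by (subst nn_integral_indep_var[OF input_family_indep_blocks[OF Z]]) (auto simp: not_in)
  also have "\<dots> = emeasure Q {\<omega>\<in>space Q. F (Z (Inl (Inr 0)) \<omega>) (W \<omega>)}"
    by (subst emeasure_Collect_eq_nn_integral) auto
  finally show ?thesis .
qed

lemma input_family_preempted:
  assumes Z: "input_family Q lam \<mu>S pB Z"
    and [measurable]: "Measurable.pred (PiM race_complement (\<lambda>_. borel)) G"
  defines "W \<equiv> \<lambda>\<omega>. restrict (\<lambda>i. Z i \<omega>) race_complement"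
  shows "measure Q {\<omega>\<in>space Q. \<not> Z (Inl (Inl 0)) \<omega> < Z (Inl (Inr 0)) \<omega> \<and> G (W \<omega>)}
       = (1 - completion_prob \<mu>S lam) * measure Q {\<omega>\<in>space Q. G (W \<omega>)}"
proof -
  interpret prob_space Q using Z by (rule input_family_prob_space)
  have [measurable]: "\<And>i. Z i \<in> borel_measurable Q" by (rule input_family_measurable[OF Z])
  have [measurable]: "W \<in> measurable Q (PiM race_complement (\<lambda>_. borel))"
    unfolding W_def by measurable
  have "emeasure Q {\<omega>\<in>space Q. Z (Inl (Inl 0)) \<omega> < Z (Inl (Inr 0)) \<omega> \<and> G (W \<omega>)}
      = ennreal (completion_prob \<mu>S lam) * emeasure Q {\<omega>\<in>space Q. G (W \<omega>)}"
    unfolding W_def by (rule input_family_memoryless[OF Z, where F="\<lambda>_ w. G w"]) measurable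
  then have completes: "measure Q {\<omega>\<in>space Q. Z (Inl (Inl 0)) \<omega> < Z (Inl (Inr 0)) \<omega> \<and> G (W \<omega>)}
      = completion_prob \<mu>S lam * measure Q {\<omega>\<in>space Q. G (W \<omega>)}"
    using input_family_completion_prob(2)[OF Z] by (simp add: measure_def enn2real_mult)
  have "{\<omega>\<in>space Q. \<not> Z (Inl (Inl 0)) \<omega> < Z (Inl (Inr 0)) \<omega> \<and> G (W \<omega>)}
      = {\<omega>\<in>space Q. G (W \<omega>)} - {\<omega>\<in>space Q. Z (Inl (Inl 0)) \<omega> < Z (Inl (Inr 0)) \<omega> \<and> G (W \<omega>)}"
    by auto
  then show ?thesis
    by (simp add: finite_measure_Diff completes Collect_mono_iff left_diff_distrib)
qed

lemma input_family_batch_event: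
  assumes Z: "input_family Q lam \<mu>S pB Z"
    and IH: "\<And>Z n. input_family Q lam \<mu>S pB Z \<Longrightarrow>
      measure Q {\<omega>\<in>space Q. exceeds_within m N n (Z (Inl (Inr 0)) \<omega>) ((\<lambda>i. Z i \<omega>) \<circ> shift_arrival)}
        = exceed_prob (completion_prob \<mu>S lam) pB m N n"
  shows "measure Q {\<omega>\<in>space Q. Z (Inr 0) \<omega> = real \<beta> \<and>
      exceeds_within m N (n + \<beta>) (Z (Inl (Inr 0)) \<omega>) ((\<lambda>i. Z i \<omega>) \<circ> shift_arrival \<circ> shift_batch)}
    = pB \<beta> * exceed_prob (completion_prob \<mu>S lam) pB m N (n + \<beta>)"
proof -
  interpret prob_space Q using Z by (rule input_family_prob_space)
  have [measurable]: "\<And>i. Z i \<in> borel_measurable Q" by (rule input_family_measurable[OF Z])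
  define W where "W \<omega> = restrict (\<lambda>i. Z i \<omega>) batch_complement" for \<omega>
  have [measurable]: "W \<in> measurable Q (PiM batch_complement (\<lambda>_. borel))" unfolding W_def by measurable
  have in_complement: "(shift_arrival \<circ> shift_batch) i \<in> batch_complement" for i
    by (auto simp: batch_complement_def shift_arrival_def shift_batch_def split: sum.splits)
  have arrival_in: "Inl (Inr 0) \<in> batch_complement" by (simp add: batch_complement_def)
  let ?rest = "\<lambda>w. exceeds_within m N (n + \<beta>) (w (Inl (Inr 0))) (w \<circ> (shift_arrival \<circ> shift_batch))"
  have "{\<omega>\<in>space Q. Z (Inr 0) \<omega> = real \<beta> \<and>
      exceeds_within m N (n + \<beta>) (Z (Inl (Inr 0)) \<omega>) ((\<lambda>i. Z i \<omega>) \<circ> shift_arrival \<circ> shift_batch)}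
    = {\<omega>\<in>space Q. (\<lambda>x. x (Inr 0) = real \<beta>) (restrict (\<lambda>i. Z i \<omega>) {Inr 0}) \<and> ?rest (W \<omega>)}"
    unfolding W_def using arrival_in
    by (simp add: comp_assoc restrict_comp[of "shift_arrival \<circ> shift_batch", OF in_complement])
  also have "measure Q \<dots> = measure Q {\<omega>\<in>space Q. (\<lambda>x. x (Inr 0) = real \<beta>) (restrict (\<lambda>i. Z i \<omega>) {Inr 0})}
      * measure Q {\<omega>\<in>space Q. ?rest (W \<omega>)}"
    unfolding W_def
  proof (rule prob_indep_var_conj[OF input_family_indep_blocks[OF Z]])
    show "Measurable.pred (PiM batch_complement (\<lambda>_. borel)) ?rest"
      using measurable_comp_reindex[OF measurable_ident_sets[OF refl],
          where \<sigma>="shift_arrival \<circ> shift_batch" and K=batch_complement] in_complement arrival_in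
      by measurable
  qed (auto simp: batch_complement_def)
  also have "measure Q {\<omega>\<in>space Q. (\<lambda>x. x (Inr 0) = real \<beta>) (restrict (\<lambda>i. Z i \<omega>) {Inr 0})} = pB \<beta>"
    using Z by (simp add: input_family_def)
  also have "{\<omega>\<in>space Q. ?rest (W \<omega>)} = {\<omega>\<in>space Q. exceeds_within m N (n + \<beta>)
      (Z (Inl (Inr 0)) \<omega>) ((\<lambda>i. Z (shift_batch i) \<omega>) \<circ> shift_arrival)}"
  proof -
    have "W \<omega> \<circ> (shift_arrival \<circ> shift_batch) = (\<lambda>i. Z (shift_batch i) \<omega>) \<circ> shift_arrival" for \<omega>
      using in_complement by (auto simp: W_def fun_eq_iff) (metis comp_apply shift_commute(2))
    then show ?thesis unfolding W_def using arrival_in by simp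
  qed
  also have "measure Q \<dots> = exceed_prob (completion_prob \<mu>S lam) pB m N (n + \<beta>)"
    using IH[OF input_family_shift(3)[OF Z]] by simp
  finally show ?thesis .
qed

lemma input_family_batch_step:
  assumes Z: "input_family Q lam \<mu>S pB Z"
    and IH: "\<And>Z n. input_family Q lam \<mu>S pB Z \<Longrightarrow>
      measure Q {\<omega>\<in>space Q. exceeds_within m N n (Z (Inl (Inr 0)) \<omega>) ((\<lambda>i. Z i \<omega>) \<circ> shift_arrival)}
        = exceed_prob (completion_prob \<mu>S lam) pB m N n"
  shows "(\<lambda>\<beta>. pB \<beta> * exceed_prob (completion_prob \<mu>S lam) pB m N (n + \<beta>)) sums
     measure Q {\<omega>\<in>space Q. \<exists>\<beta>. Z (Inr 0) \<omega> = real \<beta> \<and>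
       exceeds_within m N (n + \<beta>) (Z (Inl (Inr 0)) \<omega>) ((\<lambda>i. Z i \<omega>) \<circ> shift_arrival \<circ> shift_batch)}"
proof -
  interpret prob_space Q using Z by (rule input_family_prob_space)
  have [measurable]: "\<And>i. Z i \<in> borel_measurable Q" by (rule input_family_measurable[OF Z])
  have [measurable]: "(\<lambda>\<omega> i. Z i \<omega>) \<in> measurable Q (PiM UNIV (\<lambda>_. borel))"
    by (rule input_family_measurable_vector[OF Z])
  define A where "A \<beta> = {\<omega>\<in>space Q. Z (Inr 0) \<omega> = real \<beta> \<and>
    exceeds_within m N (n + \<beta>) (Z (Inl (Inr 0)) \<omega>) ((\<lambda>i. Z i \<omega>) \<circ> shift_arrival \<circ> shift_batch)}" for \<beta>
  have "A \<beta> \<in> sets Q" for \<beta> unfolding A_def by measurable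
  moreover have "disjoint_family A" unfolding disjoint_family_on_def A_def by auto
  ultimately have "(\<lambda>\<beta>. measure Q (A \<beta>)) sums measure Q (\<Union>\<beta>. A \<beta>)"
    by (intro finite_measure_UNION) auto
  moreover have "measure Q (A \<beta>) = pB \<beta> * exceed_prob (completion_prob \<mu>S lam) pB m N (n + \<beta>)" for \<beta>
    unfolding A_def by (rule input_family_batch_event[OF Z IH])
  moreover have "(\<Union>\<beta>. A \<beta>) = {\<omega>\<in>space Q. \<exists>\<beta>. Z (Inr 0) \<omega> = real \<beta> \<and>
      exceeds_within m N (n + \<beta>) (Z (Inl (Inr 0)) \<omega>) ((\<lambda>i. Z i \<omega>) \<circ> shift_arrival \<circ> shift_batch)}"
    unfolding A_def by auto
  ultimately show ?thesis by simp
qed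

lemma input_family_completion_branch:
  assumes Z: "input_family Q lam \<mu>S pB Z"
    and IH: "\<And>Z n. input_family Q lam \<mu>S pB Z \<Longrightarrow>
      measure Q {\<omega>\<in>space Q. exceeds_within m N n (Z (Inl (Inr 0)) \<omega>) ((\<lambda>i. Z i \<omega>) \<circ> shift_arrival)}
        = exceed_prob (completion_prob \<mu>S lam) pB m N n"
  shows "measure Q {\<omega>\<in>space Q. Z (Inl (Inl 0)) \<omega> < Z (Inl (Inr 0)) \<omega> \<and>
      exceeds_within m N n (Z (Inl (Inr 0)) \<omega> - Z (Inl (Inl 0)) \<omega>)
        ((\<lambda>i. Z i \<omega>) \<circ> shift_arrival \<circ> shift_service)}
    = completion_prob \<mu>S lam * exceed_prob (completion_prob \<mu>S lam) pB m N n"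
proof -
  interpret prob_space Q using Z by (rule input_family_prob_space)
  define p where "p = completion_prob \<mu>S lam"
  have in_complement: "(shift_arrival \<circ> shift_service) i \<in> race_complement" for i
    by (auto simp: race_complement_def shift_arrival_def shift_service_def split: sum.splits)
  have comp_eq: "(\<lambda>i. Z i \<omega>) \<circ> (shift_arrival \<circ> shift_service) = (\<lambda>i. Z (shift_service i) \<omega>) \<circ> shift_arrival"
    for \<omega> by (auto simp: fun_eq_iff) (metis comp_apply shift_commute(1))
  have F: "Measurable.pred (borel \<Otimes>\<^sub>M PiM race_complement (\<lambda>_. borel))
      (\<lambda>(u, w). exceeds_within m N n u (w \<circ> (shift_arrival \<circ> shift_service)))"
  proof -
    have "(\<lambda>w. w \<circ> (shift_arrival \<circ> shift_service))
        \<in> measurable (PiM race_complement (\<lambda>_. borel)) (PiM UNIV (\<lambda>_. borel :: real measure))"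
      by (rule measurable_reindex) (rule in_complement)
    then have "(\<lambda>x. snd x \<circ> (shift_arrival \<circ> shift_service))
        \<in> measurable (borel \<Otimes>\<^sub>M PiM race_complement (\<lambda>_. borel)) (PiM UNIV (\<lambda>_. borel :: real measure))"
      by (rule measurable_compose[OF measurable_snd])
    then show ?thesis unfolding split_beta' by (rule measurable_exceeds_within'[OF measurable_fst])
  qed
  have "emeasure Q {\<omega>\<in>space Q. Z (Inl (Inl 0)) \<omega> < Z (Inl (Inr 0)) \<omega> \<and>
      exceeds_within m N n (Z (Inl (Inr 0)) \<omega> - Z (Inl (Inl 0)) \<omega>) ((\<lambda>i. Z i \<omega>) \<circ> shift_arrival \<circ> shift_service)}
    = ennreal p * emeasure Q {\<omega>\<in>space Q. exceeds_within m N n (Z (Inl (Inr 0)) \<omega>)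
        ((\<lambda>i. Z (shift_service i) \<omega>) \<circ> shift_arrival)}"
    using input_family_memoryless[OF Z,
        where F="\<lambda>u w. exceeds_within m N n u (w \<circ> (shift_arrival \<circ> shift_service))", OF F]
    by (simp add: restrict_comp[of "shift_arrival \<circ> shift_service", OF in_complement] comp_assoc
        comp_eq p_def)
  moreover have "measure Q {\<omega>\<in>space Q. exceeds_within m N n (Z (Inl (Inr 0)) \<omega>)
        ((\<lambda>i. Z (shift_service i) \<omega>) \<circ> shift_arrival)} = exceed_prob p pB m N n"
    using IH[OF input_family_shift(1)[OF Z]] by (simp add: p_def)
  moreover have "0 \<le> p" unfolding p_def by (rule input_family_completion_prob(2)[OF Z])
  ultimately show ?thesis by (simp add: measure_def enn2real_mult p_def)
qed

lemma input_family_preemption_branch: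
  assumes Z: "input_family Q lam \<mu>S pB Z"
    and IH: "\<And>Z n. input_family Q lam \<mu>S pB Z \<Longrightarrow>
      measure Q {\<omega>\<in>space Q. exceeds_within m N n (Z (Inl (Inr 0)) \<omega>) ((\<lambda>i. Z i \<omega>) \<circ> shift_arrival)}
        = exceed_prob (completion_prob \<mu>S lam) pB m N n"
  shows "measure Q {\<omega>\<in>space Q. \<not> Z (Inl (Inl 0)) \<omega> < Z (Inl (Inr 0)) \<omega> \<and>
      (\<exists>\<beta>. Z (Inr 0) \<omega> = real \<beta> \<and> exceeds_within m N (n + \<beta>) (Z (Inl (Inr (Suc 0))) \<omega>)
              ((\<lambda>i. Z i \<omega>) \<circ> shift_arrival \<circ> shift_service \<circ> shift_arrival \<circ> shift_batch))}
    = (1 - completion_prob \<mu>S lam) * (\<Sum>\<beta>. pB \<beta> * exceed_prob (completion_prob \<mu>S lam) pB m N (n + \<beta>))"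
proof -
  interpret prob_space Q using Z by (rule input_family_prob_space)
  define \<sigma> where "\<sigma> = shift_arrival \<circ> shift_service \<circ> shift_arrival \<circ> shift_batch"
  define W where "W \<omega> = restrict (\<lambda>i. Z i \<omega>) race_complement" for \<omega>
  have \<sigma>_in: "\<sigma> i \<in> race_complement" for i
    by (auto simp: \<sigma>_def race_complement_def shift_arrival_def shift_service_def shift_batch_def
        split: sum.splits)
  have in_complement: "Inr 0 \<in> race_complement" "Inl (Inr (Suc 0)) \<in> race_complement"
    by (simp_all add: race_complement_def)
  have "W \<omega> \<circ> \<sigma> = (\<lambda>i. Z i \<omega>) \<circ> \<sigma>" for \<omega>
    unfolding W_def by (rule restrict_comp[OF \<sigma>_in])
  then have W_\<sigma>: "W \<omega> \<circ> \<sigma>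
      = (\<lambda>i. Z i \<omega>) \<circ> shift_arrival \<circ> shift_service \<circ> shift_arrival \<circ> shift_batch" for \<omega>
    by (simp add: \<sigma>_def comp_assoc)
  have W_at: "W \<omega> (Inr 0) = Z (Inr 0) \<omega>" "W \<omega> (Inl (Inr (Suc 0))) = Z (Inl (Inr (Suc 0))) \<omega>" for \<omega>
    by (simp_all add: W_def in_complement)
  define batch where "batch w \<longleftrightarrow> (\<exists>\<beta>. w (Inr 0) = real \<beta> \<and>
    exceeds_within m N (n + \<beta>) (w (Inl (Inr (Suc 0)))) (w \<circ> \<sigma>))" for w
  have [measurable]: "Measurable.pred (PiM race_complement (\<lambda>_. borel)) (\<lambda>w::input_index \<Rightarrow> real. w (Inr 0) = real \<beta>)"
    for \<beta> by (rule pred_eq_const1[where N=borel]) (use in_complement in auto)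
  have [measurable]: "(\<lambda>w::input_index \<Rightarrow> real. w \<circ> \<sigma>)
      \<in> measurable (PiM race_complement (\<lambda>_. borel)) (PiM UNIV (\<lambda>_. borel))"
    by (rule measurable_reindex) (rule \<sigma>_in)
  have [measurable]: "Measurable.pred (PiM race_complement (\<lambda>_. borel)) batch"
    unfolding batch_def using in_complement by measurable
  have "{\<omega>\<in>space Q. \<not> Z (Inl (Inl 0)) \<omega> < Z (Inl (Inr 0)) \<omega> \<and>
      (\<exists>\<beta>. Z (Inr 0) \<omega> = real \<beta> \<and> exceeds_within m N (n + \<beta>) (Z (Inl (Inr (Suc 0))) \<omega>)
              ((\<lambda>i. Z i \<omega>) \<circ> shift_arrival \<circ> shift_service \<circ> shift_arrival \<circ> shift_batch))}
    = {\<omega>\<in>space Q. \<not> Z (Inl (Inl 0)) \<omega> < Z (Inl (Inr 0)) \<omega> \<and> batch (W \<omega>)}"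
    by (auto simp: batch_def W_\<sigma> W_at)
  also have "measure Q \<dots> = (1 - completion_prob \<mu>S lam) * measure Q {\<omega>\<in>space Q. batch (W \<omega>)}"
    unfolding W_def by (rule input_family_preempted[OF Z]) measurable
  also have "measure Q {\<omega>\<in>space Q. batch (W \<omega>)}
      = (\<Sum>\<beta>. pB \<beta> * exceed_prob (completion_prob \<mu>S lam) pB m N (n + \<beta>))"
    using sums_unique[OF input_family_batch_step[OF input_family_shift(1)[OF input_family_shift(2)[OF Z]] IH]]
    unfolding batch_def W_\<sigma> by (simp add: W_at comp_def)
  finally show ?thesis .
qed

lemma input_family_exceed_prob:
  assumes "input_family Q lam \<mu>S pB Z"
  shows "measure Q {\<omega>\<in>space Q. exceeds_within m N n (Z (Inl (Inr 0)) \<omega>) ((\<lambda>i. Z i \<omega>) \<circ> shift_arrival)}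
    = exceed_prob (completion_prob \<mu>S lam) pB m N n"
  using assms
proof (induction N arbitrary: Z n)
  case 0
  interpret prob_space Q using 0 by (rule input_family_prob_space)
  show ?case by (simp add: prob_space)
next
  case (Suc N Z n)
  interpret prob_space Q using Suc.prems by (rule input_family_prob_space)
  have [measurable]: "\<And>i. Z i \<in> borel_measurable Q" by (rule input_family_measurable[OF Suc.prems])
  have [measurable]: "(\<lambda>\<omega> i. Z i \<omega>) \<in> measurable Q (PiM UNIV (\<lambda>_. borel))"
    by (rule input_family_measurable_vector[OF Suc.prems])
  show ?case
  proof (cases "m < n \<or> n = 0")
    case True
    then show ?thesis by (auto simp: prob_space)
  next
    case False
    define completes where "completes = {\<omega>\<in>space Q. Z (Inl (Inl 0)) \<omega> < Z (Inl (Inr 0)) \<omega> \<and>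
      exceeds_within m N (n - 1) (Z (Inl (Inr 0)) \<omega> - Z (Inl (Inl 0)) \<omega>)
        ((\<lambda>i. Z i \<omega>) \<circ> shift_arrival \<circ> shift_service)}"
    define preempted where "preempted = {\<omega>\<in>space Q. \<not> Z (Inl (Inl 0)) \<omega> < Z (Inl (Inr 0)) \<omega> \<and>
      (\<exists>\<beta>. Z (Inr 0) \<omega> = real \<beta> \<and> exceeds_within m N (n + \<beta>) (Z (Inl (Inr (Suc 0))) \<omega>)
              ((\<lambda>i. Z i \<omega>) \<circ> shift_arrival \<circ> shift_service \<circ> shift_arrival \<circ> shift_batch))}"
    have "{\<omega>\<in>space Q. exceeds_within m (Suc N) n (Z (Inl (Inr 0)) \<omega>) ((\<lambda>i. Z i \<omega>) \<circ> shift_arrival)}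
        = completes \<union> preempted"
      using False by (auto simp: completes_def preempted_def)
    also have "measure Q \<dots> = measure Q completes + measure Q preempted"
    proof (rule finite_measure_Union)
      show "completes \<in> sets Q" "preempted \<in> sets Q"
        unfolding completes_def preempted_def by measurable
    qed (auto simp: completes_def preempted_def)
    also have "measure Q completes
        = completion_prob \<mu>S lam * exceed_prob (completion_prob \<mu>S lam) pB m N (n - 1)"
      unfolding completes_def by (rule input_family_completion_branch[OF Suc.prems Suc.IH])
    also have "measure Q preempted = (1 - completion_prob \<mu>S lam)
        * (\<Sum>\<beta>. pB \<beta> * exceed_prob (completion_prob \<mu>S lam) pB m N (n + \<beta>))"
      unfolding preempted_def by (rule input_family_preemption_branch[OF Suc.prems Suc.IH])
    finally show ?thesis using False by simp
  qed
qed

section \<open>Application to the LCFS-p-repeat queue\<close>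

lemma lcfs_input_batch_pmf:
  assumes "lcfs_input P lam s e b"
  shows "measure P {\<omega>\<in>space P. b k \<omega> = \<beta>} = measure (distr P (count_space UNIV) (b 0)) {\<beta>}"
proof -
  have [measurable]: "b k \<in> measurable P (count_space UNIV)" using assms by (simp add: lcfs_input_def)
  have "measure P {\<omega>\<in>space P. b k \<omega> = \<beta>} = measure (distr P (count_space UNIV) (b k)) {\<beta>}"
    by (subst measure_distr) (auto intro!: arg_cong[where f="measure P"])
  also have "distr P (count_space UNIV) (b k) = distr P (count_space UNIV) (b 0)"
    using assms by (simp add: lcfs_input_def)
  finally show ?thesis .
qed

lemma batch_pmf_lcfs_input:
  assumes "lcfs_input P lam s e b"
  shows "batch_pmf (\<lambda>\<beta>. measure P {\<omega>\<in>space P. b 0 \<omega> = \<beta>})"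
proof
  interpret prob_space P using assms by (simp add: lcfs_input_def)
  have [measurable]: "b 0 \<in> measurable P (count_space UNIV)" using assms by (simp add: lcfs_input_def)
  have "(\<lambda>\<beta>. measure P {\<omega>\<in>space P. b 0 \<omega> = \<beta>}) sums measure P (\<Union>\<beta>. {\<omega>\<in>space P. b 0 \<omega> = \<beta>})"
    by (rule finite_measure_UNION) (auto simp: disjoint_family_on_def)
  moreover have "(\<Union>\<beta>. {\<omega>\<in>space P. b 0 \<omega> = \<beta>}) = space P" by auto
  ultimately show "(\<lambda>\<beta>. measure P {\<omega>\<in>space P. b 0 \<omega> = \<beta>}) sums 1" by (simp add: prob_space)
qed simp

lemma lcfs_input_service_measurable:
  assumes "lcfs_input P lam s e b"
  shows "s j \<in> borel_measurable P"
proof -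
  interpret prob_space P using assms by (simp add: lcfs_input_def)
  have "\<forall>i\<in>UNIV. (\<lambda>\<omega>. case i of Inl (Inl j) \<Rightarrow> s j \<omega> | Inl (Inr k) \<Rightarrow> e k \<omega> | Inr k \<Rightarrow> real (b k \<omega>))
      \<in> borel_measurable P"
    using assms by (simp add: lcfs_input_def indep_vars_def)
  from this[THEN bspec, of "Inl (Inl j)"] show ?thesis by simp
qed

lemma input_family_lcfs_input:
  assumes inp: "lcfs_input P lam s e b"
  shows "input_family P lam (distr P borel (s 0)) (\<lambda>\<beta>. measure P {\<omega>\<in>space P. b 0 \<omega> = \<beta>})
           (\<lambda>i \<omega>. case i of Inl (Inl j) \<Rightarrow> s j \<omega> | Inl (Inr k) \<Rightarrow> e k \<omega> | Inr k \<Rightarrow> real (b k \<omega>))"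
proof -
  have [measurable]: "s 0 \<in> borel_measurable P" by (rule lcfs_input_service_measurable[OF inp])
  have "AE x in distr P borel (s 0). 0 \<le> x"
    using inp by (subst AE_distr_iff) (auto simp: lcfs_input_def)
  moreover have "measure P {\<omega>\<in>space P. b k \<omega> = \<beta>} = measure P {\<omega>\<in>space P. b 0 \<omega> = \<beta>}" for k \<beta>
    using lcfs_input_batch_pmf[OF inp, of k] lcfs_input_batch_pmf[OF inp, of 0] by simp
  ultimately show ?thesis using inp by (simp add: input_family_def lcfs_input_def)
qed

lemma lcfs_input_completion_prob:
  assumes inp: "lcfs_input P lam s e b"
  shows "completion_prob (distr P borel (s 0)) lam = (\<integral>\<omega>. exp (- lam * s 0 \<omega>) \<partial>P)"
    and "0 \<le> (\<integral>\<omega>. exp (- lam * s 0 \<omega>) \<partial>P)" "(\<integral>\<omega>. exp (- lam * s 0 \<omega>) \<partial>P) \<le> 1"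
proof -
  have [measurable]: "s 0 \<in> borel_measurable P" by (rule lcfs_input_service_measurable[OF inp])
  show eq: "completion_prob (distr P borel (s 0)) lam = (\<integral>\<omega>. exp (- lam * s 0 \<omega>) \<partial>P)"
    unfolding completion_prob_def by (subst integral_distr) auto
  show "0 \<le> (\<integral>\<omega>. exp (- lam * s 0 \<omega>) \<partial>P)" "(\<integral>\<omega>. exp (- lam * s 0 \<omega>) \<partial>P) \<le> 1"
    using input_family_completion_prob(2,3)[OF input_family_lcfs_input[OF inp]] by (simp_all add: eq)
qed

lemma lcfs_exceed_prob_tendsto:
  assumes inp: "lcfs_input P lam s e b"
  defines "pB \<equiv> \<lambda>\<beta>. measure P {\<omega>\<in>space P. b 0 \<omega> = \<beta>}"
  shows "(\<lambda>N. \<Sum>\<beta>. pB \<beta> * exceed_prob (\<integral>\<omega>. exp (- lam * s 0 \<omega>) \<partial>P) pB m N \<beta>)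
    \<longlonglongrightarrow> measure P {\<omega>\<in>space P. enat m < lcfs_busy_max (\<lambda>j. s j \<omega>) (\<lambda>k. e k \<omega>) (\<lambda>k. b k \<omega>)}"
proof -
  interpret prob_space P using inp by (simp add: lcfs_input_def)
  define Z where "Z = (\<lambda>i \<omega>. case i of Inl (Inl j) \<Rightarrow> s j \<omega> | Inl (Inr k) \<Rightarrow> e k \<omega> | Inr k \<Rightarrow> real (b k \<omega>))"
  have Z: "input_family P lam (distr P borel (s 0)) pB Z"
    unfolding Z_def pB_def by (rule input_family_lcfs_input[OF inp])
  have [measurable]: "\<And>i. Z i \<in> borel_measurable P" by (rule input_family_measurable[OF Z])
  have [measurable]: "(\<lambda>\<omega> i. Z i \<omega>) \<in> measurable P (PiM UNIV (\<lambda>_. borel))"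
    by (rule input_family_measurable_vector[OF Z])
  define A where "A N = {\<omega>\<in>space P. \<exists>i\<le>N. m < fst (lcfs_path (\<lambda>j. s j \<omega>) (\<lambda>k. e k \<omega>) (\<lambda>k. b k \<omega>) i)}" for N
  have inputs: "input_vector (\<lambda>j. s j \<omega>) (\<lambda>k. e k \<omega>) (\<lambda>k. b k \<omega>) 0 1
      = (\<lambda>i. Z i \<omega>) \<circ> shift_arrival \<circ> shift_batch" for \<omega>
    by (auto simp: fun_eq_iff input_vector_def Z_def split: sum.splits)
  have A_eq: "A N = {\<omega>\<in>space P. \<exists>\<beta>. Z (Inr 0) \<omega> = real \<beta> \<and>
      exceeds_within m N (0 + \<beta>) (Z (Inl (Inr 0)) \<omega>) ((\<lambda>i. Z i \<omega>) \<circ> shift_arrival \<circ> shift_batch)}" for N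
    unfolding A_def lcfs_path_def lcfs_exceeds_iff_exceeds_within inputs[symmetric] by (auto simp: Z_def)
  have sums: "(\<lambda>\<beta>. pB \<beta> * exceed_prob (\<integral>\<omega>. exp (- lam * s 0 \<omega>) \<partial>P) pB m N \<beta>) sums measure P (A N)" for N
    using input_family_batch_step[OF Z input_family_exceed_prob, of m N 0]
    unfolding A_eq by (simp add: lcfs_input_completion_prob(1)[OF inp])
  have "(\<lambda>N. measure P (A N)) \<longlonglongrightarrow> measure P (\<Union>N. A N)"
  proof (rule finite_Lim_measure_incseq)
    have "A N \<in> sets P" for N unfolding A_eq by measurable
    then show "range A \<subseteq> sets P" by auto
    show "incseq A" unfolding incseq_def A_def by (auto intro: order_trans)
  qed
  moreover have "(\<Union>N. A N) = {\<omega>\<in>space P. enat m < lcfs_busy_max (\<lambda>j. s j \<omega>) (\<lambda>k. e k \<omega>) (\<lambda>k. b k \<omega>)}"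
    unfolding A_def lcfs_busy_max_def by (auto simp: less_SUP_iff)
  ultimately show ?thesis using sums_unique[OF sums] by simp
qed

theorem theorem4:
  fixes P :: "'a measure" and P' :: "'b measure" and lam mu :: real
    and s e :: "nat \<Rightarrow> 'a \<Rightarrow> real" and b :: "nat \<Rightarrow> 'a \<Rightarrow> nat"
    and s' e' :: "nat \<Rightarrow> 'b \<Rightarrow> real" and b' :: "nat \<Rightarrow> 'b \<Rightarrow> nat"
  assumes inp: "lcfs_input P lam s e b"
    and inp': "lcfs_input P' lam s' e' b'"
    and same_batch: "distr P (count_space UNIV) (b 0) = distr P' (count_space UNIV) (b' 0)"
    and mu: "mu = (\<integral>\<omega>. real (b 0 \<omega>) \<partial>P)"
    and stable: "(\<integral>\<omega>. exp (- lam * s 0 \<omega>) \<partial>P) > mu / (mu + 1)"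
    and stable': "(\<integral>\<omega>. exp (- lam * s' 0 \<omega>) \<partial>P') > mu / (mu + 1)"
    and cmp: "(\<integral>\<omega>. exp (- lam * s' 0 \<omega>) \<partial>P') \<ge> (\<integral>\<omega>. exp (- lam * s 0 \<omega>) \<partial>P)"
  shows "\<forall>t::enat.
    measure P' {\<omega> \<in> space P'. t < lcfs_busy_max (\<lambda>j. s' j \<omega>) (\<lambda>k. e' k \<omega>) (\<lambda>k. b' k \<omega>)}
    \<le> measure P {\<omega> \<in> space P. t < lcfs_busy_max (\<lambda>j. s j \<omega>) (\<lambda>k. e k \<omega>) (\<lambda>k. b k \<omega>)}"
proof -
  define pB :: "nat \<Rightarrow> real" where "pB = (\<lambda>\<beta>. measure P {\<omega>\<in>space P. b 0 \<omega> = \<beta>})"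
  have same_pB: "measure P' {\<omega>\<in>space P'. b' 0 \<omega> = \<beta>} = pB \<beta>" for \<beta>
    using lcfs_input_batch_pmf[OF inp, of 0] lcfs_input_batch_pmf[OF inp', of 0] same_batch
    by (simp add: pB_def)
  interpret batch_pmf pB unfolding pB_def by (rule batch_pmf_lcfs_input[OF inp])
  have exceeds_m: "measure P' {\<omega>\<in>space P'. enat m < lcfs_busy_max (\<lambda>j. s' j \<omega>) (\<lambda>k. e' k \<omega>) (\<lambda>k. b' k \<omega>)}
      \<le> measure P {\<omega>\<in>space P. enat m < lcfs_busy_max (\<lambda>j. s j \<omega>) (\<lambda>k. e k \<omega>) (\<lambda>k. b k \<omega>)}" for m
  proof (rule lim_exceed_prob_antimono[where p="\<integral>\<omega>. exp (- lam * s 0 \<omega>) \<partial>P"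
        and p'="\<integral>\<omega>. exp (- lam * s' 0 \<omega>) \<partial>P'"])
    show "(\<lambda>N. \<Sum>\<beta>. pB \<beta> * exceed_prob (\<integral>\<omega>. exp (- lam * s 0 \<omega>) \<partial>P) pB m N \<beta>) \<longlonglongrightarrow>
        measure P {\<omega>\<in>space P. enat m < lcfs_busy_max (\<lambda>j. s j \<omega>) (\<lambda>k. e k \<omega>) (\<lambda>k. b k \<omega>)}"
      using lcfs_exceed_prob_tendsto[OF inp, of m] by (simp add: pB_def)
    show "(\<lambda>N. \<Sum>\<beta>. pB \<beta> * exceed_prob (\<integral>\<omega>. exp (- lam * s' 0 \<omega>) \<partial>P') pB m N \<beta>) \<longlonglongrightarrow>
        measure P' {\<omega>\<in>space P'. enat m < lcfs_busy_max (\<lambda>j. s' j \<omega>) (\<lambda>k. e' k \<omega>) (\<lambda>k. b' k \<omega>)}"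
      using lcfs_exceed_prob_tendsto[OF inp', of m] by (simp add: same_pB)
  qed (use cmp lcfs_input_completion_prob(2)[OF inp] lcfs_input_completion_prob(3)[OF inp'] in auto)
  show ?thesis
  proof
    fix t :: enat
    show "measure P' {\<omega> \<in> space P'. t < lcfs_busy_max (\<lambda>j. s' j \<omega>) (\<lambda>k. e' k \<omega>) (\<lambda>k. b' k \<omega>)}
      \<le> measure P {\<omega> \<in> space P. t < lcfs_busy_max (\<lambda>j. s j \<omega>) (\<lambda>k. e k \<omega>) (\<lambda>k. b k \<omega>)}"
      using exceeds_m by (cases t) simp_all
  qed
qed

end
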